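(* Let $1<\beta<\beta_*$, where $\beta_*\approx1.4656$ is the real root of $x^3-x^2-1=0$. Then $\mathbb P(D)=1$.
   Context: $\vec q_0=(0,0)$, $\vec q_1=(1,0)$, $\vec q_2=(0,1)$. Subsets of the plane (of the triangle with vertices $(0,0)$, $(\frac1{\beta-1},0)$, $(0,\frac1{\beta-1})$): $C_{01}=\{x\ge\frac1\beta,\ 0\le y<\frac1\beta,\ x+y\le\frac{1}{\beta(\beta-1)}\}$; $C_{12}=\{x\ge\frac1\beta,\ y\ge\frac1\beta,\ \frac{1}{\beta(\beta-1)}<x+y\le\frac{1}{\beta-1}\}$; $C_{02}=\{0\le x<\frac1\beta,\ y\ge\frac1\beta,\ x+y\le\frac{1}{\beta(\beta-1)}\}$; $C_{012}=\{x\ge\frac1\beta,\ y\ge\frac1\beta,\ x+y\le\frac{1}{\beta(\beta-1)}\}$; $C=C_{01}\cup C_{12}\cup C_{02}$. $\Upsilon=\{0,1,2\}^{\mathbb N}$ with its product $\sigma$-algebra and $\mathbb P$ the uniform product (Bernoulli $(1/3,1/3,1/3)$) measure. $D$ is the set of $(b_1,b_2,\ldots)\in\Upsilon$ such that $\sum_{i\ge1}\vec q_{b_{j+i-1}}\beta^{-i}\in C$ for infinitely many $j$ and $\sum_{i\ge1}\vec q_{b_{j+i-1}}\beta^{-i}\in C_{012}$ for infinitely many $j$. *)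

theory Defs
  imports "HOL-Probability.Probability"
begin

text \<open>The real root of x^3 - x^2 - 1 = 0 (unique real root, approx. 1.4656).\<close>
definition beta_star :: real where
  "beta_star = (THE x::real. x^3 - x^2 - 1 = 0)"

definition qvec :: "nat \<Rightarrow> real \<times> real" where
  "qvec d = (if d = 1 then (1, 0) else if d = 2 then (0, 1) else (0, 0))"

definition C01 :: "real \<Rightarrow> (real \<times> real) set" where
  "C01 \<beta> = {(x, y). x \<ge> 1/\<beta> \<and> 0 \<le> y \<and> y < 1/\<beta> \<and> x + y \<le> 1/(\<beta>*(\<beta>-1))}"

definition C12 :: "real \<Rightarrow> (real \<times> real) set" where
  "C12 \<beta> = {(x, y). x \<ge> 1/\<beta> \<and> y \<ge> 1/\<beta> \<and> 1/(\<beta>*(\<beta>-1)) < x + y \<and> x + y \<le> 1/(\<beta>-1)}"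

definition C02 :: "real \<Rightarrow> (real \<times> real) set" where
  "C02 \<beta> = {(x, y). 0 \<le> x \<and> x < 1/\<beta> \<and> y \<ge> 1/\<beta> \<and> x + y \<le> 1/(\<beta>*(\<beta>-1))}"

definition C012 :: "real \<Rightarrow> (real \<times> real) set" where
  "C012 \<beta> = {(x, y). x \<ge> 1/\<beta> \<and> y \<ge> 1/\<beta> \<and> x + y \<le> 1/(\<beta>*(\<beta>-1))}"

definition Cset :: "real \<Rightarrow> (real \<times> real) set" where
  "Cset \<beta> = C01 \<beta> \<union> C12 \<beta> \<union> C02 \<beta>"

text \<open>Upsilon = {0,1,2}^N with the uniform Bernoulli product measure.
  Sequences are indexed from 0: b k stands for b_{k+1} of the paper.\<close>
definition Ups :: "(nat \<Rightarrow> nat) measure" where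
  "Ups = PiM UNIV (\<lambda>_. uniform_count_measure {0, 1, 2::nat})"

definition proj_pt :: "real \<Rightarrow> (nat \<Rightarrow> nat) \<Rightarrow> nat \<Rightarrow> real \<times> real" where
  "proj_pt \<beta> b j = (\<Sum>i. (inverse (\<beta> ^ (i + 1))) *\<^sub>R qvec (b (j + i)))"

definition Dset :: "real \<Rightarrow> (nat \<Rightarrow> nat) set" where
  "Dset \<beta> = {b \<in> space Ups.
      infinite {j. proj_pt \<beta> b j \<in> Cset \<beta>} \<and> infinite {j. proj_pt \<beta> b j \<in> C012 \<beta>}}"

end

theory Submission
  imports Defs
begin

text \<open>
  Put r = 1/\<beta>. The condition \<beta> < beta_star says exactly that r + r^3 > 1, so there is an N with
  r^N < min (r + r^3 - 1) (1 - r). Comparing the tails of the series with geometric sums, one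
  checks that whenever the word 1 2 2 0^N starts at position j of b, the point at shift j lies
  in C012 \<beta> and the point at shift j + 1 lies in C02 \<beta> \<subseteq> Cset \<beta>. The events that the word fills
  the k-th of a sequence of disjoint blocks are independent with a common positive probability,
  so almost surely the word occurs infinitely often.
\<close>

lemma cubic_neg_if_le_1: "(x::real) \<le> 1 \<Longrightarrow> x^3 - x^2 - 1 < 0"
proof -
  assume "x \<le> 1"
  then have "x^2 * (x - 1) \<le> 0" by (simp add: mult_nonneg_nonpos)
  then show ?thesis by (simp add: power2_eq_square power3_eq_cube algebra_simps)
qed

lemma cubic_strict_mono: "1 \<le> (x::real) \<Longrightarrow> x < y \<Longrightarrow> x^3 - x^2 - 1 < y^3 - y^2 - 1"
proof -
  assume xy: "1 \<le> x" "x < y"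
  then have "0 < (y - x) * (y*(y-1) + x*(x-1) + x*y)"
    by (intro mult_pos_pos) (auto intro!: add_nonneg_pos add_nonneg_nonneg)
  then show ?thesis by (simp add: power2_eq_square power3_eq_cube algebra_simps)
qed

lemma beta_star_root: "beta_star^3 - beta_star^2 - 1 = 0"
proof -
  have "\<exists>x::real. 1 \<le> x \<and> x \<le> 2 \<and> x^3 - x^2 - 1 = 0"
    by (rule IVT) (auto intro!: continuous_intros)
  moreover have "x = y" if "x^3 - x^2 - 1 = 0" "y^3 - y^2 - 1 = 0" for x y :: real
  proof -
    have "1 < x" "1 < y" using that cubic_neg_if_le_1[of x] cubic_neg_if_le_1[of y] by force+
    then show "x = y" using that cubic_strict_mono[of x y] cubic_strict_mono[of y x]
      by (cases x y rule: linorder_cases) auto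
  qed
  ultimately have "\<exists>!x::real. x^3 - x^2 - 1 = 0" by blast
  then show ?thesis unfolding beta_star_def by (rule theI')
qed

lemma one_less_inverse_add_inverse_cube:
  assumes "1 < \<beta>" and "\<beta> < beta_star"
  shows "1 < inverse \<beta> + inverse \<beta> ^ 3"
proof -
  have "\<beta>^3 - \<beta>^2 - 1 < 0"
    using cubic_strict_mono[of \<beta> beta_star] beta_star_root assms by simp
  then have "inverse \<beta> ^ 3 * (\<beta>^3 - \<beta>^2 - 1) < 0"
    using assms by (simp add: mult_pos_neg)
  also have "inverse \<beta> ^ 3 * (\<beta>^3 - \<beta>^2 - 1) = 1 - inverse \<beta> - inverse \<beta> ^ 3"
    using assms by (simp add: power2_eq_square power3_eq_cube field_simps)
  finally show ?thesis by simp
qed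

lemma one_minus_mult_sum_shifted_powers:
  fixes r :: "'a::comm_ring_1"
  shows "(1 - r) * (\<Sum>i=a..<a+n. r^(i+1)) = r^(a+1) - r^(a+n+1)"
proof (induction n)
  case (Suc n)
  have "(1 - r) * (\<Sum>i=a..<a+Suc n. r^(i+1))
      = (1 - r) * (\<Sum>i=a..<a+n. r^(i+1)) + (1 - r) * r^(a+n+1)"
    by (simp add: algebra_simps)
  also have "\<dots> = r^(a+1) - r^(a+n+1) + (1 - r) * r^(a+n+1)"
    by (simp only: Suc.IH)
  also have "\<dots> = r^(a+1) - r^(a+Suc n+1)"
    by (simp add: algebra_simps)
  finally show ?case .
qed simp

lemma sums_powers_Suc: "\<bar>r\<bar> < 1 \<Longrightarrow> (\<lambda>i. r^(i+1)) sums (r / (1 - r))" for r :: real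
  using sums_mult[OF geometric_sums[of r], of r] by (simp add: field_simps)

context
  fixes r :: real and c :: "nat \<Rightarrow> real"
  assumes r: "0 < r" "r < 1" and c: "\<And>i. 0 \<le> c i" "\<And>i. c i \<le> 1"
begin

lemma summable_weighted_digits: "summable (\<lambda>i. r^(i+1) * c i)"
proof (rule summable_comparison_test'[where N = 0])
  show "summable (\<lambda>i. r^(i+1))"
    using r by (intro sums_summable[OF sums_powers_Suc]) auto
  show "norm (r^(i+1) * c i) \<le> r^(i+1)" for i
    using r c by (auto intro: mult_left_le)
qed

lemma weighted_digits_nonneg: "0 \<le> (\<Sum>i. r^(i+1) * c i)"
  using summable_weighted_digits r c by (intro suminf_nonneg) auto

lemma weighted_digits_ge_ones:
  assumes "finite A" and "\<And>i. i \<in> A \<Longrightarrow> c i = 1"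
  shows "(\<Sum>i\<in>A. r^(i+1)) \<le> (\<Sum>i. r^(i+1) * c i)"
proof -
  have "(\<Sum>i\<in>A. r^(i+1)) = (\<Sum>i\<in>A. r^(i+1) * c i)" using assms(2) by simp
  also have "\<dots> \<le> (\<Sum>i. r^(i+1) * c i)"
    using summable_weighted_digits assms(1) r c by (intro sum_le_suminf) auto
  finally show ?thesis .
qed

lemma weighted_digits_le_zero_block:
  assumes "\<And>i. a \<le> i \<Longrightarrow> i < a + n \<Longrightarrow> c i = 0"
  shows "(\<Sum>i. r^(i+1) * c i) \<le> r / (1 - r) * (1 - r^a + r^(a+n))"
proof -
  have gaps: "(\<lambda>i. r^(i+1) - r^(i+1) * c i) sums (r / (1 - r) - (\<Sum>i. r^(i+1) * c i))"
    using r by (intro sums_diff sums_powers_Suc summable_sums summable_weighted_digits) auto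
  have "r / (1 - r) * (r^a - r^(a+n)) = (\<Sum>i=a..<a+n. r^(i+1))"
    using one_minus_mult_sum_shifted_powers[of r a n] r by (simp add: field_simps)
  also have "\<dots> = (\<Sum>i=a..<a+n. r^(i+1) - r^(i+1) * c i)"
    using assms by simp
  also have "\<dots> \<le> (\<Sum>i. r^(i+1) - r^(i+1) * c i)"
    using sums_summable[OF gaps] r c mult_left_le[of "c _" "r^(_+1)"]
    by (intro sum_le_suminf) auto
  also have "\<dots> = r / (1 - r) - (\<Sum>i. r^(i+1) * c i)"
    using gaps by (simp add: sums_iff)
  finally show ?thesis by (simp add: algebra_simps)
qed

end

lemma fst_qvec: "fst (qvec d) = (if d = 1 then 1 else 0)"
  and snd_qvec: "snd (qvec d) = (if d = 2 then 1 else 0)"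
  and fst_add_snd_qvec: "fst (qvec d) + snd (qvec d) = (if d = 1 \<or> d = 2 then 1 else 0)"
  by (simp_all add: qvec_def)

lemma bounded_linear_image_proj_pt:
  assumes "1 < \<beta>" and f: "bounded_linear f"
  shows "f (proj_pt \<beta> b j) = (\<Sum>i. inverse \<beta> ^ (i+1) * f (qvec (b (j+i))))"
proof -
  have "summable (\<lambda>i. inverse (\<beta> ^ (i+1)) *\<^sub>R qvec (b (j+i)))"
  proof (rule summable_comparison_test'[of "\<lambda>i. inverse \<beta> ^ (i+1)"])
    show "summable (\<lambda>i. inverse \<beta> ^ (i+1))"
      using assms by (intro sums_summable[OF sums_powers_Suc]) (simp add: inverse_less_1_iff)
    show "norm (inverse (\<beta> ^ (i+1)) *\<^sub>R qvec (b (j+i))) \<le> inverse \<beta> ^ (i+1)" for i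
      using assms by (simp add: qvec_def power_inverse)
  qed
  then show ?thesis
    unfolding proj_pt_def
    by (simp add: bounded_linear.suminf[OF f] linear.scaleR[OF bounded_linear.linear[OF f]] power_inverse)
qed

lemma bounded_linear_fst_add_snd: "bounded_linear (\<lambda>p::real \<times> real. fst p + snd p)"
  by (intro bounded_linear_add bounded_linear_fst bounded_linear_snd)

lemma proj_pt_in_C012:
  fixes \<beta> :: real
  defines "r \<equiv> inverse \<beta>"
  assumes \<beta>: "1 < \<beta>" and N: "r^N < r + r^3 - 1"
    and digits: "b j = 1" "b (j+1) = 2" "b (j+2) = 2" "\<And>k. k < N \<Longrightarrow> b (j+3+k) = 0"
  shows "proj_pt \<beta> b j \<in> C012 \<beta>"
proof -
  have r: "0 < r" "r < 1" using \<beta> by (simp_all add: r_def inverse_less_1_iff)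
  have "r^3 \<le> r^2" "r^(3+N) \<le> r^N"
    using r by (intro power_decreasing; simp)+
  have "0 < r^N" using r by simp
  then have "1 \<le> r + r^2" using N \<open>r^3 \<le> r^2\<close> by linarith
  from mult_left_mono[OF this, of r] have "r \<le> r^2 + r^3"
    using r by (simp add: power2_eq_square power3_eq_cube algebra_simps)
  moreover have "1 - r^3 + r^(3+N) \<le> r" using N \<open>r^(3+N) \<le> r^N\<close> by linarith
  ultimately have r_bounds: "r \<le> r^2 + r^3" "1 - r^3 + r^(3+N) \<le> r" .
  have "r \<le> fst (proj_pt \<beta> b j)"
  proof -
    have "(\<Sum>i\<in>{0}. r^(i+1)) \<le> (\<Sum>i. r^(i+1) * fst (qvec (b (j+i))))"
      by (rule weighted_digits_ge_ones) (use r digits in \<open>auto simp: fst_qvec\<close>)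
    then show ?thesis by (simp add: bounded_linear_image_proj_pt[OF \<beta> bounded_linear_fst] r_def)
  qed
  moreover have "r \<le> snd (proj_pt \<beta> b j)"
  proof -
    have "(\<Sum>i\<in>{1,2}. r^(i+1)) \<le> (\<Sum>i. r^(i+1) * snd (qvec (b (j+i))))"
      by (rule weighted_digits_ge_ones) (use r digits in \<open>auto simp: snd_qvec\<close>)
    then show ?thesis
      using r_bounds by (simp add: bounded_linear_image_proj_pt[OF \<beta> bounded_linear_snd] r_def numeral_eq_Suc)
  qed
  moreover have "fst (proj_pt \<beta> b j) + snd (proj_pt \<beta> b j) \<le> r * (r / (1 - r))"
  proof -
    have "(\<Sum>i. r^(i+1) * (fst (qvec (b (j+i))) + snd (qvec (b (j+i)))))
        \<le> r / (1 - r) * (1 - r^3 + r^(3+N))"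
      by (rule weighted_digits_le_zero_block)
        (use r digits in \<open>auto simp: fst_add_snd_qvec add.assoc dest!: le_Suc_ex\<close>)
    also have "\<dots> \<le> r / (1 - r) * r"
      using r r_bounds by (intro mult_left_mono) auto
    finally show ?thesis
      by (simp add: bounded_linear_image_proj_pt[OF \<beta> bounded_linear_fst_add_snd] r_def mult.commute)
  qed
  moreover have "1/\<beta> = r" "1/(\<beta>*(\<beta>-1)) = r * (r / (1 - r))"
    using \<beta> by (simp_all add: r_def field_simps)
  ultimately show ?thesis by (cases "proj_pt \<beta> b j") (simp add: C012_def)
qed

lemma proj_pt_in_C02:
  fixes \<beta> :: real
  defines "r \<equiv> inverse \<beta>"
  assumes \<beta>: "1 < \<beta>" and N: "r^N < r + r^3 - 1" "r^N < 1 - r"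
    and digits: "b j = 2" "b (j+1) = 2" "\<And>k. k < N \<Longrightarrow> b (j+2+k) = 0"
  shows "proj_pt \<beta> b j \<in> C02 \<beta>"
proof -
  have r: "0 < r" "r < 1" using \<beta> by (simp_all add: r_def inverse_less_1_iff)
  have "r^3 \<le> r^2" "r^(2+N) \<le> r^N"
    using r by (intro power_decreasing; simp)+
  then have r_bounds: "r^(2+N) < 1 - r" "1 - r^2 + r^(2+N) \<le> r" using N by linarith+
  have "0 \<le> fst (proj_pt \<beta> b j)"
    using weighted_digits_nonneg[OF r, of "\<lambda>i. fst (qvec (b (j+i)))"]
    by (simp add: bounded_linear_image_proj_pt[OF \<beta> bounded_linear_fst] r_def fst_qvec)
  moreover have "fst (proj_pt \<beta> b j) < r"
  proof -
    have no_1: "b (j+i) \<noteq> 1" if "i < 2+N" for i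
    proof (cases "i < 2")
      case True
      then have "i = 0 \<or> i = 1" by auto
      then show ?thesis using digits by auto
    next
      case False
      then obtain k where "i = 2 + k" using le_Suc_ex[of 2 i] by auto
      then show ?thesis using digits(3)[of k] that by (simp add: add.assoc)
    qed
    have "(\<Sum>i. r^(i+1) * fst (qvec (b (j+i)))) \<le> r / (1 - r) * (1 - r^0 + r^(0+(2+N)))"
      by (rule weighted_digits_le_zero_block) (use r no_1 in \<open>auto simp: fst_qvec\<close>)
    also have "\<dots> = r * (r^(2+N) / (1 - r))" by simp
    also have "\<dots> < r" using r r_bounds by (simp add: divide_less_eq)
    finally show ?thesis by (simp add: bounded_linear_image_proj_pt[OF \<beta> bounded_linear_fst] r_def)
  qed
  moreover have "r \<le> snd (proj_pt \<beta> b j)"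
  proof -
    have "(\<Sum>i\<in>{0}. r^(i+1)) \<le> (\<Sum>i. r^(i+1) * snd (qvec (b (j+i))))"
      by (rule weighted_digits_ge_ones) (use r digits in \<open>auto simp: snd_qvec\<close>)
    then show ?thesis by (simp add: bounded_linear_image_proj_pt[OF \<beta> bounded_linear_snd] r_def)
  qed
  moreover have "fst (proj_pt \<beta> b j) + snd (proj_pt \<beta> b j) \<le> r * (r / (1 - r))"
  proof -
    have "(\<Sum>i. r^(i+1) * (fst (qvec (b (j+i))) + snd (qvec (b (j+i)))))
        \<le> r / (1 - r) * (1 - r^2 + r^(2+N))"
      by (rule weighted_digits_le_zero_block)
        (use r digits in \<open>auto simp: fst_add_snd_qvec add.assoc dest!: le_Suc_ex\<close>)
    also have "\<dots> \<le> r / (1 - r) * r"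
      using r r_bounds by (intro mult_left_mono) auto
    finally show ?thesis
      by (simp add: bounded_linear_image_proj_pt[OF \<beta> bounded_linear_fst_add_snd] r_def mult.commute)
  qed
  moreover have "1/\<beta> = r" "1/(\<beta>*(\<beta>-1)) = r * (r / (1 - r))"
    using \<beta> by (simp_all add: r_def field_simps)
  ultimately show ?thesis by (cases "proj_pt \<beta> b j") (simp add: C02_def)
qed

lemma (in prob_space) prob_INT_compl_indep_events:
  assumes indep: "indep_events A I" and J: "J \<subseteq> I" "J \<noteq> {}" "finite J"
  shows "prob (\<Inter>k\<in>J. space M - A k) = (\<Prod>k\<in>J. 1 - prob (A k))"
proof -
  have A: "A k \<in> events" if "k \<in> I" for k
    using indep that by (auto simp: indep_events_def)
  have "indep_sets (\<lambda>k. sigma_sets (space M) {A k}) I"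
    using indep unfolding indep_events_def_alt
    by (rule indep_sets_sigma) (simp add: Int_stable_def)
  then have "prob (\<Inter>k\<in>J. space M - A k) = (\<Prod>k\<in>J. prob (space M - A k))"
    using J by (rule indep_setsD) (auto intro: sigma_sets.Compl sigma_sets.Basic)
  also have "\<dots> = (\<Prod>k\<in>J. 1 - prob (A k))"
    using A J by (intro prod.cong refl prob_compl) auto
  finally show ?thesis .
qed

lemma (in prob_space) AE_infinitely_many_indep_events:
  fixes A :: "nat \<Rightarrow> 'a set"
  assumes indep: "indep_events A UNIV" and p: "0 < p" "\<And>k. p \<le> prob (A k)"
  shows "AE x in M. infinite {k. x \<in> A k}"
proof -
  have A: "A k \<in> events" for k
    using indep by (auto simp: indep_events_def)
  have "AE x in M. \<exists>k\<ge>m. x \<in> A k" for m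
  proof (rule AE_I')
    let ?E = "\<Inter>k\<in>{m..}. space M - A k"
    show "{x \<in> space M. \<not> (\<exists>k\<ge>m. x \<in> A k)} \<subseteq> ?E" by auto
    have "prob ?E \<le> (1 - p)^n" for n
    proof (cases "n = 0")
      case False
      have "prob ?E \<le> prob (\<Inter>k\<in>{m..<m+n}. space M - A k)"
        using A False by (intro finite_measure_mono) auto
      also have "\<dots> = (\<Prod>k\<in>{m..<m+n}. 1 - prob (A k))"
        using False by (intro prob_INT_compl_indep_events[OF indep]) auto
      also have "\<dots> \<le> (\<Prod>k\<in>{m..<m+n}. 1 - p)"
        using p by (intro prod_mono) (auto simp: prob_le_1)
      finally show ?thesis by simp
    qed simp
    moreover have "(\<lambda>n. (1 - p)^n) \<longlonglongrightarrow> 0"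
      using p(1) order_trans[OF p(2) prob_le_1] by (intro LIMSEQ_power_zero) auto
    ultimately have "prob ?E \<le> 0"
      by (intro LIMSEQ_le_const) auto
    then show "?E \<in> null_sets M"
      using A by (intro null_setsI) (auto simp: emeasure_eq_measure measure_le_0_iff)
  qed
  then show ?thesis
    by (simp add: AE_all_countable infinite_nat_iff_unbounded_le)
qed

interpretation Ups: prob_space Ups
  unfolding Ups_def by (intro prob_space_PiM prob_space_uniform_count_measure) auto

definition cylinder :: "nat set \<Rightarrow> (nat \<Rightarrow> nat) \<Rightarrow> (nat \<Rightarrow> nat) set" where
  "cylinder U w = {b \<in> space Ups. \<forall>i\<in>U. b i = w i}"

lemma cylinder_eq_prod_emb:
  "cylinder U w = prod_emb UNIV (\<lambda>_. uniform_count_measure {0,1,2}) U (\<Pi>\<^sub>E i\<in>U. {w i})"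
  unfolding cylinder_def prod_emb_def Ups_def by (auto simp: space_PiM Pi_iff)

lemma
  assumes "finite U" and "\<And>i. i \<in> U \<Longrightarrow> w i \<in> {0,1,2}"
  shows sets_cylinder: "cylinder U w \<in> sets Ups"
    and measure_cylinder: "measure Ups (cylinder U w) = (1/3) ^ card U"
proof -
  interpret product_prob_space "\<lambda>_. uniform_count_measure {0,1,2::nat}" UNIV
    by (intro product_prob_space.intro product_sigma_finite.intro product_prob_space_axioms.intro
        prob_space_imp_sigma_finite prob_space_uniform_count_measure) auto
  show "cylinder U w \<in> sets Ups"
    unfolding cylinder_eq_prod_emb Ups_def
    using assms by (intro sets_PiM_I) (auto simp: sets_uniform_count_measure)
  have "measure Ups (cylinder U w) = (\<Prod>i\<in>U. measure (uniform_count_measure {0,1,2}) {w i})"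
    unfolding cylinder_eq_prod_emb Ups_def
    using assms by (intro measure_PiM_emb) (auto simp: sets_uniform_count_measure)
  also have "\<dots> = (1/3) ^ card U"
    using assms by (simp add: measure_uniform_count_measure)
  finally show "measure Ups (cylinder U w) = (1/3) ^ card U" .
qed

lemma indep_events_cylinders:
  fixes U :: "'i \<Rightarrow> nat set"
  assumes disj: "disjoint_family U" and fin: "\<And>k. finite (U k)" and w: "\<And>i. w i \<in> {0,1,2}"
  shows "Ups.indep_events (\<lambda>k. cylinder (U k) w) UNIV"
proof (rule Ups.indep_eventsI)
  show "cylinder (U k) w \<in> sets Ups" for k
    using fin w by (rule sets_cylinder)
  fix J :: "'i set" assume J: "finite J" "J \<noteq> {}"
  have "(\<Inter>k\<in>J. cylinder (U k) w) = cylinder (\<Union>k\<in>J. U k) w"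
    using J(2) unfolding cylinder_def by blast
  then have "Ups.prob (\<Inter>k\<in>J. cylinder (U k) w) = (1/3) ^ (\<Sum>k\<in>J. card (U k))"
    using J fin w disj
    by (simp add: measure_cylinder card_UN_disjoint disjoint_family_on_def)
  also have "\<dots> = (\<Prod>k\<in>J. Ups.prob (cylinder (U k) w))"
    using fin w by (simp add: power_sum measure_cylinder)
  finally show "Ups.prob (\<Inter>k\<in>J. cylinder (U k) w) = (\<Prod>k\<in>J. Ups.prob (cylinder (U k) w))" .
qed

lemma measurable_proj_pt [measurable]: "(\<lambda>b. proj_pt \<beta> b j) \<in> borel_measurable Ups"
proof -
  have "qvec \<in> measurable (uniform_count_measure {0,1,2}) borel"
    by (simp add: measurable_def sets_uniform_count_measure space_uniform_count_measure)
  then have "(\<lambda>b. qvec (b (j+i))) \<in> borel_measurable Ups" for i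
    unfolding Ups_def by (intro measurable_compose[OF measurable_component_singleton]) simp_all
  then show ?thesis unfolding proj_pt_def by measurable
qed

lemma pred_mem_C [measurable]:
  "Measurable.pred borel (\<lambda>p. p \<in> C01 \<beta>)" "Measurable.pred borel (\<lambda>p. p \<in> C12 \<beta>)"
  "Measurable.pred borel (\<lambda>p. p \<in> C02 \<beta>)" "Measurable.pred borel (\<lambda>p. p \<in> C012 \<beta>)"
proof -
  have [measurable]: "fst \<in> borel_measurable (borel :: (real \<times> real) measure)"
    "snd \<in> borel_measurable (borel :: (real \<times> real) measure)"
    by (intro borel_measurable_continuous_onI continuous_intros)+
  show "Measurable.pred borel (\<lambda>p. p \<in> C01 \<beta>)" "Measurable.pred borel (\<lambda>p. p \<in> C12 \<beta>)"
    "Measurable.pred borel (\<lambda>p. p \<in> C02 \<beta>)" "Measurable.pred borel (\<lambda>p. p \<in> C012 \<beta>)"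
    unfolding C01_def C12_def C02_def C012_def mem_Collect_eq case_prod_beta by measurable
qed

lemma sets_Dset: "Dset \<beta> \<in> sets Ups"
proof -
  have "Dset \<beta> = {b \<in> space Ups. (\<forall>m. \<exists>j\<ge>m. proj_pt \<beta> b j \<in> Cset \<beta>) \<and> (\<forall>m. \<exists>j\<ge>m. proj_pt \<beta> b j \<in> C012 \<beta>)}"
    by (simp add: Dset_def infinite_nat_iff_unbounded_le)
  also have "\<dots> \<in> sets Ups"
    unfolding Cset_def by measurable
  finally show ?thesis .
qed

definition occurs_at :: "nat list \<Rightarrow> (nat \<Rightarrow> nat) \<Rightarrow> nat \<Rightarrow> bool" where
  "occurs_at w b j \<longleftrightarrow> (\<forall>t<length w. b (j+t) = w ! t)"

lemma AE_infinitely_many_block_occurrences: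
  assumes "set w \<subseteq> {0,1,2}"
  shows "AE b in Ups. infinite {k. occurs_at w b (k * Suc (length w))}"
proof -
  define L where "L = length w"
  \<comment> \<open>stride Suc L rather than L, so that distinct blocks start at distinct positions even for w = []\<close>
  define U where "U k = {k * Suc L ..< k * Suc L + L}" for k
  define v where "v i = (if i mod Suc L < L then w ! (i mod Suc L) else 0)" for i
  have v: "v i \<in> {0,1,2}" for i
  proof (cases "i mod Suc L < L")
    case True
    then have "w ! (i mod Suc L) \<in> set w" by (simp add: L_def)
    then show ?thesis using assms by (auto simp: v_def)
  qed (simp add: v_def)
  have "U k \<inter> U k' = {}" if "k < k'" for k k'
    using mult_le_mono1[of "Suc k" k' "Suc L"] that by (auto simp: U_def)
  then have "disjoint_family U"
    unfolding disjoint_family_on_def by (metis Int_commute linorder_neqE_nat)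
  moreover have "finite (U k)" "card (U k) = L" for k
    by (simp_all add: U_def)
  ultimately have "AE b in Ups. infinite {k. b \<in> cylinder (U k) v}"
    using v by (intro Ups.AE_infinitely_many_indep_events[where p = "(1/3) ^ L"] indep_events_cylinders)
      (simp_all add: measure_cylinder)
  moreover have "occurs_at w b (k * Suc L)" if "b \<in> cylinder (U k) v" for b k
    unfolding occurs_at_def L_def[symmetric]
  proof (intro allI impI)
    fix t assume "t < L"
    then have "k * Suc L + t \<in> U k" "(k * Suc L + t) mod Suc L = t"
      by (simp_all add: U_def del: mult_Suc_right)
    then show "b (k * Suc L + t) = w ! t"
      using that \<open>t < L\<close> by (auto simp: cylinder_def v_def)
  qed
  ultimately show ?thesis
    unfolding L_def by (elim eventually_mono) (auto elim!: infinite_super[rotated])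
qed

lemma AE_occurs_infinitely_often:
  assumes "set w \<subseteq> {0,1,2}"
  shows "AE b in Ups. infinite {j. occurs_at w b j}"
  using AE_infinitely_many_block_occurrences[OF assms]
proof (rule eventually_mono)
  fix b
  let ?K = "{k. occurs_at w b (k * Suc (length w))}"
  assume "infinite ?K"
  then have "infinite ((\<lambda>k. k * Suc (length w)) ` ?K)"
    by (subst finite_image_iff) (auto simp: inj_on_def simp del: mult_Suc_right)
  then show "infinite {j. occurs_at w b j}"
    by (rule infinite_super[rotated]) auto
qed

lemma Dset_if_occurs_infinitely_often:
  fixes \<beta> :: real and N :: nat
  defines "r \<equiv> inverse \<beta>" and "w \<equiv> [1,2,2] @ replicate N 0"
  assumes \<beta>: "1 < \<beta>" and N: "r^N < r + r^3 - 1" "r^N < 1 - r"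
    and b: "b \<in> space Ups" and occ: "infinite {j. occurs_at w b j}"
  shows "b \<in> Dset \<beta>"
proof -
  let ?O = "{j. occurs_at w b j}"
  have "proj_pt \<beta> b j \<in> C012 \<beta> \<and> proj_pt \<beta> b (Suc j) \<in> C02 \<beta>" if "j \<in> ?O" for j
  proof -
    have occurs: "\<forall>t<N+3. b (j+t) = w ! t"
      using that by (simp add: occurs_at_def w_def)
    have digits: "b j = 1" "b (j+1) = 2" "b (j+2) = 2"
      using occurs[rule_format, of 0] occurs[rule_format, of 1] occurs[rule_format, of 2]
      by (simp_all add: w_def)
    have zeros: "b (j+3+k) = 0" if "k < N" for k
      using occurs[rule_format, of "3+k"] that by (simp add: w_def nth_append add.assoc)
    have "proj_pt \<beta> b j \<in> C012 \<beta>"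
      by (rule proj_pt_in_C012[OF \<beta>]) (use N digits zeros in \<open>simp_all add: r_def\<close>)
    moreover have "proj_pt \<beta> b (Suc j) \<in> C02 \<beta>"
      by (rule proj_pt_in_C02[OF \<beta>]) (use N digits zeros in \<open>simp_all add: r_def numeral_eq_Suc\<close>)
    ultimately show ?thesis ..
  qed
  then have "?O \<subseteq> {j. proj_pt \<beta> b j \<in> C012 \<beta>}" "Suc ` ?O \<subseteq> {j. proj_pt \<beta> b j \<in> Cset \<beta>}"
    by (auto simp: Cset_def)
  moreover have "infinite (Suc ` ?O)"
    using occ by (simp add: finite_image_iff)
  ultimately show ?thesis
    using b occ by (auto simp: Dset_def dest: finite_subset)
qed

theorem lemma4p5:
  fixes \<beta> :: real
  assumes "1 < \<beta>" and "\<beta> < beta_star"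
  shows "measure Ups (Dset \<beta>) = 1"
proof -
  define r where "r = inverse \<beta>"
  have r: "0 < r" "r < 1" using assms(1) by (simp_all add: r_def inverse_less_1_iff)
  have "0 < min (r + r^3 - 1) (1 - r)"
    using one_less_inverse_add_inverse_cube[OF assms] r by (simp add: r_def)
  then obtain N where N: "r^N < r + r^3 - 1" "r^N < 1 - r"
    using real_arch_pow_inv[OF _ r(2)] by (metis min_less_iff_conj)
  have "AE b in Ups. infinite {j. occurs_at ([1,2,2] @ replicate N 0) b j}"
    by (rule AE_occurs_infinitely_often) (simp add: set_replicate_conv_if)
  then have "AE b in Ups. b \<in> Dset \<beta>"
    using Dset_if_occurs_infinitely_often[OF assms(1) N[unfolded r_def]]
    by (auto elim: AE_mp[OF _ AE_I2])
  then show ?thesis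
    using Ups.prob_eq_1[OF sets_Dset] by simp
qed

end
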